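(* Let $n\ge 4$, $N=\{1,\dots,n\}$, fix distinct $i_1,i_2\in N$ and let $\hat N^c=N\setminus\{i_1,i_2\}$. Then the inequality $$\sum_{j\in\hat N^c}\left(x_{i_1j}+x_{ji_1}+x_{i_2j}\right)-x_{i_2i_1}-\sum_{j,j'\in\hat N^c:\,j\ne j'} x_{jj'}\le 3-\frac{(n-4)(n-5)}{2}$$ defines a facet of the weak order polytope $P^n_{WO}$.
   Context: Let $N=\{1,\dots,n\}$ and $A_N=\{(i,j): i,j\in N, i\ne j\}$. A weak order on $N$ is a binary relation $W\subseteq N\times N$ that is reflexive, transitive and total; $(i,j)\in W$ is read "$i$ is preferred over or tied with $j$". The characteristic vector of $W$ is $x^W\in\{0,1\}^{A_N}$ with $x^W_{(i,j)}=1$ if $(i,j)\in W$ and $0$ otherwise. The weak order polytope $P^n_{WO}$ is the convex hull of the characteristic vectors of all weak orders on $N$; its points are vectors $x\in\mathbb{R}^{A_N}$ and $x_{ij}$ denotes the coordinate $x_{(i,j)}$. $P^n_{WO}$ has dimension $n(n-1)$. An inequality $\pi x\le\pi_0$ defines a facet of a polytope $P$ if it is valid for $P$ (holds for all $x\in P$) and the face $P\cap\{x:\pi x=\pi_0\}$ is nonempty, proper, and contains $\dim(P)$ affinely independent points. *)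

theory Defs
  imports "HOL-Analysis.Analysis"
begin

text \<open>The ground set N is modelled by a finite type 'n (so n = CARD('n)).
  Points of the ambient space are vectors indexed by pairs (i,j); the
  diagonal coordinates (i,i), which are not in A_N, are identically 0
  for all characteristic vectors (so they play no role).\<close>

definition weak_order :: "('n \<times> 'n) set \<Rightarrow> bool" where
  "weak_order W \<longleftrightarrow> refl W \<and> trans W \<and> total W"

definition char_vec :: "('n::finite \<times> 'n) set \<Rightarrow> real ^ ('n \<times> 'n)" where
  "char_vec W = (\<chi> p. if fst p \<noteq> snd p \<and> p \<in> W then 1 else 0)"

definition weak_order_polytope :: "(real ^ ('n::finite \<times> 'n)) set" where
  "weak_order_polytope = convex hull {char_vec W | W. weak_order W}"

definition defines_facet ::
  "('a::euclidean_space \<Rightarrow> real) \<Rightarrow> real \<Rightarrow> 'a set \<Rightarrow> bool" where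
  "defines_facet f c P \<longleftrightarrow>
     (\<forall>x\<in>P. f x \<le> c) \<and>
     (let F = P \<inter> {x. f x = c} in
        F \<noteq> {} \<and> F \<noteq> P \<and>
        (\<exists>S. S \<subseteq> F \<and> finite S \<and> int (card S) = aff_dim P \<and> \<not> affine_dependent S))"

end

theory Submission
  imports Defs
begin

(* For a weak order, x_jj' + x_j'j = 1 + [j and j' tied], so the left-hand side equals the
   right-hand side plus  sum_j (x_i1j + x_ji1 + x_i2j - 2) - x_i2i1 - t/2,  where t counts the tied
   ordered pairs in N minus {i1, i2}.  A summand is positive only for j tied with i1 and ranked
   weakly below i2; if there are k >= 1 such j, they force x_i2i1 = 1 and t >= k(k-1), and
   k - 1 - k(k-1)/2 <= 0.  For the facet property, weak orders given by integer ranks yield enough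
   tight points that their differences, together with one unit vector joining a tight point to a
   non-tight one, span every off-diagonal unit vector; so all vertices lie in the affine hull of the
   face plus one point. *)

lemma mem_affine_hull_if_diff_in_span:
  assumes "a \<in> S" and "x - a \<in> span {p - q | p q. p \<in> S \<and> q \<in> S}"
  shows "x \<in> affine hull S"
proof -
  have "p - q \<in> span ((\<lambda>y. - a + y) ` S)" if "p \<in> S" "q \<in> S" for p q
  proof -
    have "(- a + p) - (- a + q) \<in> span ((\<lambda>y. - a + y) ` S)"
      using that by (intro span_diff span_base) auto
    then show ?thesis by simp
  qed
  then have "{p - q | p q. p \<in> S \<and> q \<in> S} \<subseteq> span ((\<lambda>y. - a + y) ` S)"
    by blast
  then have "x - a \<in> span ((\<lambda>y. - a + y) ` S)"
    using assms(2) span_mono span_span by blast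
  then have "a + (x - a) \<in> (\<lambda>y. a + y) ` span ((\<lambda>y. - a + y) ` S)" by blast
  then show ?thesis
    using affine_hull_span_gen[OF hull_inc[OF assms(1)]] by simp
qed

lemma in_span_if_offdiag_axes_in_span:
  fixes x :: "real ^ ('n::finite \<times> 'n)"
  assumes "\<And>a. x $ (a, a) = 0" and "\<And>a b. a \<noteq> b \<Longrightarrow> axis (a, b) 1 \<in> span S"
  shows "x \<in> span S"
proof -
  have "(\<Sum>p\<in>UNIV. x $ p *\<^sub>R axis p 1) \<in> span S"
  proof (rule span_sum)
    fix p :: "'n \<times> 'n"
    show "x $ p *\<^sub>R axis p 1 \<in> span S"
      using assms by (cases p; cases "fst p = snd p") (auto intro: span_scale span_zero)
  qed
  then show ?thesis
    using basis_expansion[of x] by (simp add: scalar_mult_eq_scaleR)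
qed

lemma affinely_independent_subset_with_card:
  fixes T :: "'a::euclidean_space set"
  assumes "int d \<le> aff_dim T + 1"
  obtains S where "S \<subseteq> T" "finite S" "card S = d" "\<not> affine_dependent S"
proof -
  obtain B where B: "B \<subseteq> T" "\<not> affine_dependent B" "affine hull T = affine hull B"
    using affine_basis_exists[of T] by blast
  have "int (card B) = aff_dim T + 1"
    using aff_dim_affine_independent[OF B(2)] aff_dim_affine_hull2[OF B(3)] by simp
  then have "d \<le> card B" using assms by linarith
  then obtain S where "S \<subseteq> B" "card S = d" "finite S"
    by (rule obtain_subset_with_card_n)
  then show ?thesis
    using that B affine_independent_subset[OF B(2)] by blast
qed

lemma defines_facetI:
  fixes f :: "'a::euclidean_space \<Rightarrow> real"
  assumes "linear f" and P: "P = convex hull V" and valid: "\<And>v. v \<in> V \<Longrightarrow> f v \<le> c"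
    and T: "T \<subseteq> V" "T \<noteq> {}" "\<And>t. t \<in> T \<Longrightarrow> f t = c"
    and q: "q \<in> V" "f q < c" and V: "V \<subseteq> affine hull (insert q T)"
  shows "defines_facet f c P"
proof -
  define F where "F = P \<inter> {x. f x = c}"
  have "f ` P = convex hull (f ` V)"
    unfolding P by (rule convex_hull_linear_image[OF \<open>linear f\<close>])
  also have "\<dots> \<subseteq> {..c}"
    using valid by (intro hull_minimal) auto
  finally have P_valid: "\<forall>x\<in>P. f x \<le> c" by auto
  have VP: "V \<subseteq> P" unfolding P by (rule hull_subset)
  have TF: "T \<subseteq> F" using T VP by (auto simp: F_def)
  have "F \<noteq> P" using q VP by (auto simp: F_def)
  have "aff_dim P = aff_dim V" unfolding P by (rule aff_dim_convex_hull)
  also have "\<dots> \<le> aff_dim (affine hull (insert q T))"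
    by (rule aff_dim_subset[OF V])
  also have "\<dots> = aff_dim (insert q T)"
    by (rule aff_dim_affine_hull)
  also have "\<dots> \<le> aff_dim T + 1"
    unfolding aff_dim_insert by simp
  finally have dim_le: "aff_dim P \<le> aff_dim T + 1" .
  have "P \<noteq> {}" using T VP by blast
  then have "aff_dim P \<ge> 0"
    using aff_dim_geq[of P] aff_dim_empty[of P] by linarith
  then obtain d where d: "aff_dim P = int d"
    using nonneg_int_cases by blast
  obtain S where S: "S \<subseteq> T" "finite S" "card S = d" "\<not> affine_dependent S"
    using affinely_independent_subset_with_card[of d T] d dim_le by auto
  have "S \<subseteq> F" using S(1) TF by blast
  moreover have "F \<noteq> {}" using TF T(2) by blast
  moreover have "int (card S) = aff_dim P" using S(3) d by simp
  ultimately show ?thesis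
    unfolding defines_facet_def Let_def F_def[symmetric]
    using P_valid \<open>F \<noteq> P\<close> S(2,4) by (intro conjI exI[of _ S]) simp_all
qed

definition offdiag :: "'a set \<Rightarrow> ('a \<times> 'a) set" where
  "offdiag A = {(a, b). a \<in> A \<and> b \<in> A \<and> a \<noteq> b}"

lemma offdiag_singleton [simp]: "offdiag {a} = {}"
  by (auto simp: offdiag_def)

lemma offdiag_doubleton: "a \<noteq> b \<Longrightarrow> offdiag {a, b} = {(a, b), (b, a)}"
  by (auto simp: offdiag_def)

lemma card_offdiag:
  assumes "finite A"
  shows "card (offdiag A) + card A = card A * card A"
proof -
  have "offdiag A = A \<times> A - (\<lambda>a. (a, a)) ` A" by (auto simp: offdiag_def)
  moreover have "card ((\<lambda>a. (a, a)) ` A) = card A" by (rule card_image) (auto intro: inj_onI)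
  ultimately show ?thesis
    using assms by (simp add: card_Diff_subset card_cartesian_product image_subset_iff le_square)
qed

lemma real_card_offdiag:
  "finite A \<Longrightarrow> real (card (offdiag A)) = real (card A) * real (card A) - real (card A)"
  using card_offdiag[of A] by (metis add_diff_cancel_right' of_nat_add of_nat_mult)

lemma sum_offdiag_swap: "(\<Sum>p\<in>offdiag A. g (prod.swap p)) = sum g (offdiag A)"
  by (rule sum.reindex_bij_witness[of _ prod.swap prod.swap]) (auto simp: offdiag_def)

lemma char_vec_apply: "char_vec W $ (a, b) = of_bool (a \<noteq> b \<and> (a, b) \<in> W)"
  by (simp add: char_vec_def)

definition facet_lhs :: "'n::finite \<Rightarrow> 'n \<Rightarrow> real ^ ('n \<times> 'n) \<Rightarrow> real" where
  "facet_lhs i1 i2 x = (\<Sum>j\<in>UNIV - {i1, i2}. x $ (i1, j) + x $ (j, i1) + x $ (i2, j))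
     - x $ (i2, i1) - (\<Sum>p\<in>offdiag (UNIV - {i1, i2}). x $ p)"

definition facet_rhs :: "nat \<Rightarrow> real" where
  "facet_rhs n = 3 - (real n - 4) * (real n - 5) / 2"

definition excess :: "('n \<times> 'n) set \<Rightarrow> 'n \<Rightarrow> 'n \<Rightarrow> 'n \<Rightarrow> real" where
  "excess W i1 i2 j = of_bool ((i1, j) \<in> W) + of_bool ((j, i1) \<in> W) + of_bool ((i2, j) \<in> W) - 2"

lemma linear_facet_lhs: "linear (facet_lhs i1 i2)"
  by (rule linearI)
    (simp_all add: facet_lhs_def sum.distrib sum_distrib_left algebra_simps sum_subtractf)

lemma card_UNIV_minus_pair:
  assumes "(i1 :: 'n::finite) \<noteq> i2"
  shows "real (card (UNIV - {i1, i2})) = real CARD('n) - 2"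
proof -
  have "card {i1, i2} \<le> CARD('n)" by (rule card_mono) auto
  then show ?thesis using assms by (simp add: card_Diff_subset of_nat_diff)
qed

lemma facet_lhs_char_vec:
  fixes i1 i2 :: "'n::finite"
  assumes W: "weak_order W" and "i1 \<noteq> i2"
  shows "facet_lhs i1 i2 (char_vec W) = facet_rhs CARD('n)
      + (\<Sum>j\<in>UNIV - {i1, i2}. excess W i1 i2 j)
      - of_bool ((i2, i1) \<in> W) - card (offdiag (UNIV - {i1, i2}) \<inter> W \<inter> W\<inverse>) / 2"
proof -
  define R where "R = UNIV - {i1, i2}"
  define ties where "ties = offdiag R \<inter> W \<inter> W\<inverse>"
  let ?x = "char_vec W"
  have "2 * (\<Sum>p\<in>offdiag R. ?x $ p) = (\<Sum>p\<in>offdiag R. ?x $ p + ?x $ prod.swap p)"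
    by (simp add: sum.distrib sum_offdiag_swap)
  also have "\<dots> = (\<Sum>p\<in>offdiag R. 1 + of_bool (p \<in> W \<inter> W\<inverse>))"
    using W
    by (intro sum.cong) (fastforce simp: offdiag_def char_vec_def weak_order_def total_on_def)+
  also have "\<dots> = card (offdiag R) + card ties"
    by (simp add: sum.distrib sum_of_bool_eq Int_def ties_def)
  finally have pairs: "(\<Sum>p\<in>offdiag R. ?x $ p) = (card (offdiag R) + card ties) / 2"
    by simp
  have R: "real (card R) = real CARD('n) - 2"
    unfolding R_def by (rule card_UNIV_minus_pair) fact
  have "(\<Sum>j\<in>R. ?x $ (i1, j) + ?x $ (j, i1) + ?x $ (i2, j)) = (\<Sum>j\<in>R. excess W i1 i2 j + 2)"
    by (rule sum.cong) (auto simp: R_def char_vec_apply excess_def)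
  then have "facet_lhs i1 i2 ?x = (\<Sum>j\<in>R. excess W i1 i2 j) + 2 * (real CARD('n) - 2)
      - of_bool ((i2, i1) \<in> W)
      - ((real CARD('n) - 2) * (real CARD('n) - 3) + card ties) / 2"
    using \<open>i1 \<noteq> i2\<close> unfolding facet_lhs_def R_def[symmetric] pairs
    by (simp add: char_vec_apply sum.distrib R real_card_offdiag algebra_simps)
  then show ?thesis
    unfolding facet_rhs_def R_def[symmetric] ties_def[symmetric] by (simp add: field_simps)
qed

lemma facet_lhs_le_rhs:
  fixes i1 i2 :: "'n::finite"
  assumes W: "weak_order W" and "i1 \<noteq> i2"
  shows "facet_lhs i1 i2 (char_vec W) \<le> facet_rhs CARD('n)"
proof -
  define R where "R = UNIV - {i1, i2}"
  define G where "G = {j \<in> R. (i1, j) \<in> W \<and> (j, i1) \<in> W \<and> (i2, j) \<in> W}"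
  define ties where "ties = offdiag R \<inter> W \<inter> W\<inverse>"
  have "(\<Sum>j\<in>R. excess W i1 i2 j) \<le> (\<Sum>j\<in>R. of_bool (j \<in> G))"
    by (intro sum_mono) (auto simp: G_def excess_def)
  also have "\<dots> = card G"
    by (simp add: sum_of_bool_eq G_def Int_def)
  finally have excess_G: "(\<Sum>j\<in>R. excess W i1 i2 j) \<le> card G" .
  have "card G \<le> of_bool ((i2, i1) \<in> W) + card ties / 2"
  proof (cases "G = {}")
    case False
    then obtain g where "g \<in> G" by blast
    have "trans W" using W by (simp add: weak_order_def)
    then have "(i2, i1) \<in> W" using \<open>g \<in> G\<close> unfolding G_def trans_def by blast
    have "offdiag G \<subseteq> ties"
      using \<open>trans W\<close> unfolding G_def ties_def offdiag_def trans_def by blast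
    then have "card (offdiag G) \<le> card ties"
      by (simp add: card_mono ties_def)
    moreover have "real (card G) \<le> 1 + real (card (offdiag G)) / 2"
    proof -
      have "(real (card G) - 1) * (real (card G) - 2) \<ge> 0"
      proof (cases "card G \<ge> 2")
        case True
        then show ?thesis by (intro mult_nonneg_nonneg) simp_all
      next
        case False
        then have "card G = 0 \<or> card G = 1" by linarith
        then show ?thesis by auto
      qed
      then show ?thesis by (simp add: real_card_offdiag field_simps)
    qed
    ultimately show ?thesis using \<open>(i2, i1) \<in> W\<close> by simp
  qed simp
  then show ?thesis
    using excess_G facet_lhs_char_vec[OF assms] unfolding R_def ties_def by linarith
qed

definition rank_order :: "('a \<Rightarrow> int) \<Rightarrow> ('a \<times> 'a) set" where
  "rank_order r = {(a, b). r a \<le> r b}"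

lemma weak_order_rank_order: "weak_order (rank_order r)"
  unfolding weak_order_def rank_order_def refl_on_def trans_def total_on_def by auto

lemma mem_rank_order_iff [simp]: "(a, b) \<in> rank_order r \<longleftrightarrow> r a \<le> r b"
  by (simp add: rank_order_def)

lemma char_vec_rank_order:
  "char_vec (rank_order r) $ (a, b) = of_bool (a \<noteq> b \<and> r a \<le> r b)"
  by (simp add: char_vec_apply rank_order_def)

(* Lower rank means preferred.  Elements that are not re-ranked keep the distinct ranks
   to_nat x >= 0, i.e. they form singleton classes below all re-ranked (negative) elements. *)
definition base_rank :: "'a::countable \<Rightarrow> int" where
  "base_rank x = int (to_nat x)"

lemma facet_lhs_rank_order:
  fixes i1 i2 :: "'n::finite" and r :: "'n \<Rightarrow> int"
  assumes "i1 \<noteq> i2" and J: "i1 \<notin> J" "i2 \<notin> J"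
    and neg: "\<And>x. x \<in> insert i1 (insert i2 J) \<Longrightarrow> r x < 0"
    and base: "\<And>x. x \<notin> insert i1 (insert i2 J) \<Longrightarrow> r x = base_rank x"
  shows "facet_lhs i1 i2 (char_vec (rank_order r)) = facet_rhs CARD('n)
     + (\<Sum>j\<in>J. excess (rank_order r) i1 i2 j)
     - of_bool (r i2 \<le> r i1) - (\<Sum>(a, b)\<in>offdiag J. of_bool (r a = r b)) / 2"
proof -
  define R where "R = UNIV - {i1, i2}"
  have "J \<subseteq> R" using J by (auto simp: R_def)
  have "(\<Sum>j\<in>R. excess (rank_order r) i1 i2 j) = (\<Sum>j\<in>J. excess (rank_order r) i1 i2 j)"
  proof (rule sum.mono_neutral_right)
    show "\<forall>j\<in>R - J. excess (rank_order r) i1 i2 j = 0"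
      using neg[of i1] neg[of i2] base
      by (force simp: R_def base_rank_def excess_def)
  qed (use \<open>J \<subseteq> R\<close> in auto)
  moreover have "offdiag R \<inter> rank_order r \<inter> (rank_order r)\<inverse> = offdiag J \<inter> {(a, b). r a = r b}"
  proof -
    have "a \<in> J" if "(a, b) \<in> offdiag R" "r a = r b" for a b
    proof (rule ccontr)
      assume "a \<notin> J"
      then have "r a = base_rank a" using that(1) base by (auto simp: offdiag_def R_def)
      then have "b \<notin> insert i1 (insert i2 J)"
        using neg[of b] that(2) by (auto simp: base_rank_def)
      then have "to_nat a = to_nat b"
        using base[of b] \<open>r a = base_rank a\<close> that(2) by (simp add: base_rank_def)
      then show False using that(1) by (auto simp: offdiag_def)
    qed
    then show ?thesis
      using \<open>J \<subseteq> R\<close> by (auto simp: offdiag_def rank_order_def) (metis order_antisym)+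
  qed
  ultimately show ?thesis
    using facet_lhs_char_vec[OF weak_order_rank_order \<open>i1 \<noteq> i2\<close>, of r] unfolding R_def
    by (simp add: rank_order_def sum_of_bool_eq Int_def case_prod_beta)
qed

definition tight_points :: "'n::finite \<Rightarrow> 'n \<Rightarrow> (real ^ ('n \<times> 'n)) set" where
  "tight_points i1 i2 =
     {char_vec W | W. weak_order W \<and> facet_lhs i1 i2 (char_vec W) = facet_rhs CARD('n)}"

definition tight_diffs :: "'n::finite \<Rightarrow> 'n \<Rightarrow> (real ^ ('n \<times> 'n)) set" where
  "tight_diffs i1 i2 = span {p - q | p q. p \<in> tight_points i1 i2 \<and> q \<in> tight_points i1 i2}"

lemma rank_order_diff_in_tight_diffs:
  fixes i1 i2 :: "'n::finite"
  assumes "facet_lhs i1 i2 (char_vec (rank_order r)) = facet_rhs CARD('n)"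
    and "facet_lhs i1 i2 (char_vec (rank_order r')) = facet_rhs CARD('n)"
    and "char_vec (rank_order r) - char_vec (rank_order r') = v"
  shows "v \<in> tight_diffs i1 i2"
proof -
  have "char_vec (rank_order r) \<in> tight_points i1 i2"
    and "char_vec (rank_order r') \<in> tight_points i1 i2"
    using assms(1,2) weak_order_rank_order by (auto simp: tight_points_def)
  then show ?thesis
    unfolding tight_diffs_def assms(3)[symmetric] by (blast intro: span_base)
qed

lemma axis_j_i2_in_tight_diffs:
  fixes i1 i2 :: "'n::finite"
  assumes "i1 \<noteq> i2" "j \<notin> {i1, i2}"
  shows "axis (j, i2) 1 \<in> tight_diffs i1 i2"
  using assms
  by (intro rank_order_diff_in_tight_diffs[where
        r = "base_rank(i1 := -3, i2 := -2, j := -2)" and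
        r' = "base_rank(i1 := -3, i2 := -2, j := -1)"];
      (subst facet_lhs_rank_order[where J = "{j}"])?)
    (auto simp: excess_def vec_eq_iff char_vec_rank_order axis_def base_rank_def)

lemma axis_i1_i2_plus_axis_j_i2_in_tight_diffs:
  fixes i1 i2 :: "'n::finite"
  assumes "i1 \<noteq> i2" "j \<notin> {i1, i2}"
  shows "axis (i1, i2) 1 + axis (j, i2) 1 \<in> tight_diffs i1 i2"
  using assms
  by (intro rank_order_diff_in_tight_diffs[where
        r = "base_rank(i2 := -1, i1 := -1, j := -1)" and
        r' = "base_rank(i2 := -2, i1 := -1, j := -1)"];
      (subst facet_lhs_rank_order[where J = "{j}"])?)
    (auto simp: excess_def vec_eq_iff char_vec_rank_order axis_def base_rank_def)

lemma axis_i1_j_plus_axis_j'_j_in_tight_diffs: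
  fixes i1 i2 :: "'n::finite"
  assumes "i1 \<noteq> i2" "j \<notin> {i1, i2}" "j' \<notin> {i1, i2}" "j \<noteq> j'"
  shows "axis (i1, j) 1 + axis (j', j) 1 \<in> tight_diffs i1 i2"
  using assms
  by (intro rank_order_diff_in_tight_diffs[where
        r = "base_rank(i2 := -3, i1 := -2, j' := -2, j := -2)" and
        r' = "base_rank(i2 := -3, j := -2, i1 := -1, j' := -1)"];
      (subst facet_lhs_rank_order[where J = "{j, j'}"])?)
    (auto simp: offdiag_doubleton excess_def vec_eq_iff char_vec_rank_order
      axis_def base_rank_def)

lemma axis_j_i1_plus_axis_j_j'_in_tight_diffs:
  fixes i1 i2 :: "'n::finite"
  assumes "i1 \<noteq> i2" "j \<notin> {i1, i2}" "j' \<notin> {i1, i2}" "j \<noteq> j'"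
  shows "axis (j, i1) 1 + axis (j, j') 1 \<in> tight_diffs i1 i2"
  using assms
  by (intro rank_order_diff_in_tight_diffs[where
        r = "base_rank(i2 := -3, i1 := -2, j' := -2, j := -2)" and
        r' = "base_rank(i2 := -3, i1 := -2, j' := -2, j := -1)"];
      (subst facet_lhs_rank_order[where J = "{j, j'}"])?)
    (auto simp: offdiag_doubleton excess_def vec_eq_iff char_vec_rank_order
      axis_def base_rank_def)

lemma axis_j_j'_minus_axis_j'_j_in_tight_diffs:
  fixes i1 i2 :: "'n::finite"
  assumes "i1 \<noteq> i2" "j \<notin> {i1, i2}" "j' \<notin> {i1, i2}" "j \<noteq> j'"
  shows "axis (j, j') 1 - axis (j', j) 1 \<in> tight_diffs i1 i2"
  using assms
  by (intro rank_order_diff_in_tight_diffs[where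
        r = "base_rank(i1 := -4, i2 := -3, j := -2, j' := -1)" and
        r' = "base_rank(i1 := -4, i2 := -3, j := -1, j' := -2)"];
      (subst facet_lhs_rank_order[where J = "{j, j'}"])?)
    (auto simp: offdiag_doubleton excess_def vec_eq_iff char_vec_rank_order
      axis_def base_rank_def)

lemma axis_j_i1_minus_axis_i2_j_in_tight_diffs:
  fixes i1 i2 :: "'n::finite"
  assumes "i1 \<noteq> i2" "j \<notin> {i1, i2}"
  shows "axis (j, i1) 1 - axis (i2, j) 1 \<in> tight_diffs i1 i2"
  using assms
  by (intro rank_order_diff_in_tight_diffs[where
        r = "base_rank(i1 := -2, j := -2, i2 := -1)" and
        r' = "base_rank(i1 := -2, j := -1, i2 := -1)"];
      (subst facet_lhs_rank_order[where J = "{j}"])?)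
    (auto simp: excess_def vec_eq_iff char_vec_rank_order axis_def base_rank_def)

lemma axis_i2_i1_plus_axis_i2_j_in_tight_diffs:
  fixes i1 i2 :: "'n::finite"
  assumes "i1 \<noteq> i2" "j \<notin> {i1, i2}"
  shows "axis (i2, i1) 1 + axis (i2, j) 1 \<in> tight_diffs i1 i2"
  using assms
  by (intro rank_order_diff_in_tight_diffs[where
        r = "base_rank(i1 := -1, j := -1, i2 := -1)" and
        r' = "base_rank(i1 := -2, j := -2, i2 := -1)"];
      (subst facet_lhs_rank_order[where J = "{j}"])?)
    (auto simp: excess_def vec_eq_iff char_vec_rank_order axis_def base_rank_def)

lemma obtain_non_tight_weak_order:
  fixes i1 i2 :: "'n::finite"
  assumes "i1 \<noteq> i2" "j \<notin> {i1, i2}"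
  obtains W where "weak_order W" "facet_lhs i1 i2 (char_vec W) < facet_rhs CARD('n)"
    "char_vec W + axis (i1, j) 1 \<in> tight_points i1 i2"
proof
  let ?r = "base_rank(i2 := -3, j := -2, i1 := -1)"
  let ?t = "base_rank(i2 := -3, i1 := -1, j := -1)"
  show "weak_order (rank_order ?r)" by (rule weak_order_rank_order)
  show "facet_lhs i1 i2 (char_vec (rank_order ?r)) < facet_rhs CARD('n)"
    using assms
    by (subst facet_lhs_rank_order[where J = "{j}"]) (auto simp: excess_def)
  have "facet_lhs i1 i2 (char_vec (rank_order ?t)) = facet_rhs CARD('n)"
    using assms
    by (subst facet_lhs_rank_order[where J = "{j}"]) (auto simp: excess_def)
  moreover have "char_vec (rank_order ?r) + axis (i1, j) 1 = char_vec (rank_order ?t)"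
    using assms by (auto simp: vec_eq_iff char_vec_rank_order axis_def base_rank_def)
  ultimately show "char_vec (rank_order ?r) + axis (i1, j) 1 \<in> tight_points i1 i2"
    using weak_order_rank_order by (auto simp: tight_points_def)
qed

lemma axis_in_span_tight_diffs:
  fixes i1 i2 :: "'n::finite"
  assumes card: "CARD('n) \<ge> 4" and "i1 \<noteq> i2" and j0: "j0 \<notin> {i1, i2}" and "a \<noteq> b"
  shows "axis (a, b) 1 \<in> span (insert (axis (i1, j0) 1) (tight_diffs i1 i2))"
proof -
  define M where "M = span (insert (axis (i1, j0) 1) (tight_diffs i1 i2))"
  have TD: "v \<in> M" if "v \<in> tight_diffs i1 i2" for v
    using that by (simp add: M_def span_base)
  note add = span_add[of _ "insert (axis (i1, j0) 1) (tight_diffs i1 i2)", folded M_def]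
  note diff = span_diff[of _ "insert (axis (i1, j0) 1) (tight_diffs i1 i2)", folded M_def]
  have i1_j0: "axis (i1, j0) 1 \<in> M" by (simp add: M_def span_base)
  have j_j0: "axis (j, j0) 1 \<in> M" if "j \<notin> {i1, i2}" "j \<noteq> j0" for j
    using diff[OF TD[OF axis_i1_j_plus_axis_j'_j_in_tight_diffs[of i1 i2 j0 j]] i1_j0]
      assms that by simp
  have j0_j: "axis (j0, j) 1 \<in> M" if "j \<notin> {i1, i2}" "j \<noteq> j0" for j
    using add[OF TD[OF axis_j_j'_minus_axis_j'_j_in_tight_diffs[of i1 i2 j0 j]] j_j0[of j]]
      assms that by simp
  have i1_j: "axis (i1, j) 1 \<in> M" if "j \<notin> {i1, i2}" for j
  proof (cases "j = j0")
    case False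
    then show ?thesis
      using diff[OF TD[OF axis_i1_j_plus_axis_j'_j_in_tight_diffs[of i1 i2 j j0]] j0_j[of j]]
        assms that by simp
  qed (use i1_j0 in simp)
  have j'_j: "axis (j', j) 1 \<in> M" if "j \<notin> {i1, i2}" "j' \<notin> {i1, i2}" "j \<noteq> j'" for j j'
    using diff[OF TD[OF axis_i1_j_plus_axis_j'_j_in_tight_diffs[of i1 i2 j j']] i1_j[of j]]
      assms that by simp
  have j_i1: "axis (j, i1) 1 \<in> M" if "j \<notin> {i1, i2}" for j
  proof -
    have "card {i1, i2, j} < CARD('n)" using card by (simp add: card_insert_if)
    then have "{i1, i2, j} \<noteq> UNIV" by auto
    then obtain j' where "j' \<notin> {i1, i2, j}" by blast
    then show ?thesis
      using diff[OF TD[OF axis_j_i1_plus_axis_j_j'_in_tight_diffs[of i1 i2 j j']] j'_j[of j' j]]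
        assms that by simp
  qed
  have i2_j: "axis (i2, j) 1 \<in> M" if "j \<notin> {i1, i2}" for j
    using diff[OF j_i1[of j] TD[OF axis_j_i1_minus_axis_i2_j_in_tight_diffs[of i1 i2 j]]]
      assms that by simp
  have j_i2: "axis (j, i2) 1 \<in> M" if "j \<notin> {i1, i2}" for j
    using TD[OF axis_j_i2_in_tight_diffs[of i1 i2 j]] assms that by simp
  have i1_i2: "axis (i1, i2) 1 \<in> M"
    using diff[OF TD[OF axis_i1_i2_plus_axis_j_i2_in_tight_diffs[of i1 i2 j0]] j_i2[of j0]]
      assms by simp
  have i2_i1: "axis (i2, i1) 1 \<in> M"
    using diff[OF TD[OF axis_i2_i1_plus_axis_i2_j_in_tight_diffs[of i1 i2 j0]] i2_j[of j0]]
      assms by simp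
  show ?thesis
    unfolding M_def[symmetric]
    using \<open>a \<noteq> b\<close> \<open>i1 \<noteq> i2\<close> i1_i2 i2_i1 i1_j i2_j j_i1 j_i2 j'_j[of b a]
    by (cases "a = i1"; cases "a = i2"; cases "b = i1"; cases "b = i2") auto
qed

lemma char_vec_in_affine_hull_tight_points:
  fixes i1 i2 :: "'n::finite"
  assumes "CARD('n) \<ge> 4" and "i1 \<noteq> i2" and "j0 \<notin> {i1, i2}"
    and t: "q + axis (i1, j0) 1 \<in> tight_points i1 i2"
  shows "char_vec W \<in> affine hull (insert q (tight_points i1 i2))"
proof -
  define S where "S = insert q (tight_points i1 i2)"
  define t where "t = q + axis (i1, j0) 1"
  define D where "D = span {p - p' | p p'. p \<in> S \<and> p' \<in> S}"
  have "t \<in> S" "q \<in> S" using t by (simp_all add: S_def t_def)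
  then have "t - q \<in> D"
    unfolding D_def by (intro span_base) blast
  then have "axis (i1, j0) 1 \<in> D"
    by (simp add: t_def)
  moreover have "tight_diffs i1 i2 \<subseteq> D"
    unfolding tight_diffs_def D_def S_def by (intro span_mono) blast
  ultimately have "span (insert (axis (i1, j0) 1) (tight_diffs i1 i2)) \<subseteq> D"
    unfolding D_def by (intro span_minimal) (auto simp: subspace_span)
  then have axes: "axis (a, b) 1 \<in> D" if "a \<noteq> b" for a b
    using axis_in_span_tight_diffs[OF assms(1-3) that] by blast
  obtain Wt where "t = char_vec Wt"
    using t unfolding t_def[symmetric] tight_points_def by blast
  have "char_vec W - t \<in> D"
    unfolding D_def
  proof (rule in_span_if_offdiag_axes_in_span)
    show "(char_vec W - t) $ (a, a) = 0" for a
      using \<open>t = char_vec Wt\<close> by (simp add: char_vec_apply)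
  qed (use axes in \<open>simp add: D_def\<close>)
  then show ?thesis
    using mem_affine_hull_if_diff_in_span[OF \<open>t \<in> S\<close>] by (simp add: D_def S_def)
qed

theorem mainTheorem10:
  fixes i1 i2 :: "'n::finite"
  assumes "CARD('n) \<ge> 4" and "i1 \<noteq> i2"
  shows "defines_facet
    (\<lambda>x :: real ^ ('n \<times> 'n).
        (\<Sum>j\<in>UNIV - {i1, i2}. x $ (i1, j) + x $ (j, i1) + x $ (i2, j))
        - x $ (i2, i1)
        - (\<Sum>p\<in>{(j, j'). j \<in> UNIV - {i1, i2} \<and> j' \<in> UNIV - {i1, i2} \<and> j \<noteq> j'}. x $ p))
    (3 - (real CARD('n) - 4) * (real CARD('n) - 5) / 2)
    (weak_order_polytope :: (real ^ ('n \<times> 'n)) set)"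
proof -
  have "card {i1, i2} < CARD('n)" using assms(1) by (simp add: card_insert_if)
  then have "{i1, i2} \<noteq> UNIV" by auto
  then obtain j0 where j0: "j0 \<notin> {i1, i2}" by blast
  obtain W0 where W0: "weak_order W0" "facet_lhs i1 i2 (char_vec W0) < facet_rhs CARD('n)"
    "char_vec W0 + axis (i1, j0) 1 \<in> tight_points i1 i2"
    using obtain_non_tight_weak_order[OF assms(2) j0] .
  have "defines_facet (facet_lhs i1 i2) (facet_rhs CARD('n))
      (weak_order_polytope :: (real ^ ('n \<times> 'n)) set)"
  proof (rule defines_facetI[OF linear_facet_lhs weak_order_polytope_def])
    show "char_vec W0 \<in> {char_vec W | W. weak_order W}" using W0(1) by blast
    show "{char_vec W | W. weak_order W} \<subseteq> affine hull (insert (char_vec W0) (tight_points i1 i2))"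
      using char_vec_in_affine_hull_tight_points[OF assms j0 W0(3)] by blast
  qed (use W0 facet_lhs_le_rhs[OF _ assms(2)] in \<open>auto simp: tight_points_def\<close>)
  then show ?thesis unfolding facet_lhs_def offdiag_def facet_rhs_def .
qed

end
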